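(* Let $A$ be an antilinear operator on a complex $n$-dimensional space $W$, let $\lambda>0$ be real, and for $k\ge0$ put $W_\lambda^{(k)}=\ker(A^2-\lambda^2 I)^k$ (a complex subspace) and $\widetilde W_\lambda^{(k)}=\{x\in W:(A-\lambda I)^kx=0\}$ (a real subspace). Then any basis of the real vector space $\widetilde W_\lambda^{(k)}$ is also a basis of the complex vector space $W_\lambda^{(k)}$.
   Context: An antilinear operator satisfies $A(zv+w)=\bar z Av+Aw$. Since $\lambda$ is real, $A-\lambda I$ is antilinear and its iterates' kernels are real vector subspaces. *)

theory Defs
  imports "HOL-Analysis.Analysis"
begin

text \<open>W = complex^'n, a complex vector space of dimension CARD('n).
  Complex scalar multiplication is (*s); the underlying real structure is scaleR.\<close>

definition antilinear :: "(complex^'n \<Rightarrow> complex^'n) \<Rightarrow> bool" where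
  "antilinear A \<longleftrightarrow> (\<forall>z v w. A (z *s v + w) = cnj z *s A v + A w)"

definition gen_eig_C :: "(complex^'n \<Rightarrow> complex^'n) \<Rightarrow> real \<Rightarrow> nat \<Rightarrow> (complex^'n) set" where
  "gen_eig_C A l k = {x. ((\<lambda>y. A (A y) - (complex_of_real (l^2)) *s y) ^^ k) x = 0}"

definition gen_eig_R :: "(complex^'n \<Rightarrow> complex^'n) \<Rightarrow> real \<Rightarrow> nat \<Rightarrow> (complex^'n) set" where
  "gen_eig_R A l k = {x. ((\<lambda>y. A y - l *\<^sub>R y) ^^ k) x = 0}"

definition real_basis_of :: "(complex^'n) set \<Rightarrow> (complex^'n) set \<Rightarrow> bool" where
  "real_basis_of B S \<longleftrightarrow> independent B \<and> span B = S"

definition complex_basis_of :: "(complex^'n) set \<Rightarrow> (complex^'n) set \<Rightarrow> bool" where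
  "complex_basis_of B S \<longleftrightarrow> \<not> vec.dependent B \<and> vec.span B = S"

end

theory Submission
  imports Defs
begin

text \<open>Put \<open>T = A - \<lambda>\<close> and \<open>S = A + \<lambda>\<close>. These real-linear maps commute and \<open>S - T = 2\<lambda> \<noteq> 0\<close>,
  so \<open>ker (T\<^sup>k S\<^sup>k) = ker T\<^sup>k \<oplus> ker S\<^sup>k\<close>, while \<open>T\<^sup>k S\<^sup>k = (A\<^sup>2 - \<lambda>\<^sup>2)\<^sup>k\<close>. Antilinearity gives
  \<open>T (i y) = -i S y\<close> and \<open>S (i y) = -i T y\<close>, so multiplication by \<open>i\<close> exchanges \<open>ker T\<^sup>k\<close>
  and \<open>ker S\<^sup>k\<close>. Hence \<open>V = ker T\<^sup>k\<close> satisfies \<open>ker (A\<^sup>2 - \<lambda>\<^sup>2)\<^sup>k = V \<oplus> iV\<close>: \<open>V\<close> is a real form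
  of that complex subspace, and a real basis of a real form is a complex basis.\<close>

lemma linear_funpow: "linear (f :: 'a::real_vector \<Rightarrow> 'a) \<Longrightarrow> linear (f ^^ n)"
  by (induction n) (auto intro: linear_compose linear_id simp: id_def[symmetric])

lemma funpow_intertwine:
  assumes "\<And>x. f (g x) = h (f x)"
  shows "f ((g ^^ n) x) = (h ^^ n) (f x)"
  by (induction n) (simp_all add: assms)

lemma funpow_comp_commute:
  assumes "\<And>x. f (g x) = g (f x)"
  shows "((\<lambda>x. f (g x)) ^^ n) x = (f ^^ n) ((g ^^ n) x)"
proof (induction n arbitrary: x)
  case (Suc n)
  have "g ((f ^^ n) y) = (f ^^ n) (g y)" for y
    using funpow_intertwine[of g f f n y] assms by metis
  with Suc show ?case by simp
qed simp

lemma funpow_uminus: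
  fixes f :: "'a::real_vector \<Rightarrow> 'a"
  assumes "linear f"
  shows "((\<lambda>y. - f y) ^^ n) x = (-1) ^ n *\<^sub>R (f ^^ n) x"
  by (induction n) (simp_all add: linear_neg[OF assms] linear_scale[OF assms])

locale linear_shift_pair =
  fixes T S :: "'a::real_vector \<Rightarrow> 'a" and m :: real
  assumes linear_T: "linear T"
    and shift: "\<And>x. S x - T x = m *\<^sub>R x"
    and m_nonzero: "m \<noteq> 0"
begin

lemma S_eq: "S x = T x + m *\<^sub>R x"
  using shift[of x] by (simp add: algebra_simps)

lemma linear_S: "linear S"
  unfolding S_eq[abs_def] by (intro linear_compose_add linear_T linear_scaleR)

lemma commute: "T (S x) = S (T x)"
  by (simp add: S_eq linear_add[OF linear_T] linear_scale[OF linear_T])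

lemma funpow_commute: "(T ^^ a) ((S ^^ b) x) = (S ^^ b) ((T ^^ a) x)"
  by (rule funpow_intertwine) (metis funpow_intertwine commute)

lemma kernels_disjoint:
  assumes "(T ^^ a) x = 0" and "(S ^^ b) x = 0"
  shows "x = 0"
  using assms
proof (induction a arbitrary: x)
  case (Suc a)
  define y where "y = (T ^^ a) x"
  have "S y = m *\<^sub>R y"
    using Suc.prems(1) by (simp add: S_eq y_def)
  then have "(S ^^ b) y = (m ^ b) *\<^sub>R y"
    by (induction b) (simp_all add: linear_scale[OF linear_S])
  moreover have "(S ^^ b) y = 0"
    using Suc.prems(2) linear_0[OF linear_funpow[OF linear_T]] by (simp add: y_def funpow_commute[symmetric])
  ultimately have "(T ^^ a) x = 0"
    using m_nonzero by (simp add: y_def)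
  with Suc.IH Suc.prems(2) show ?case by blast
qed simp

text \<open>The induction step writes \<open>x = (S x - T x)/m\<close> and decomposes \<open>S x\<close> and \<open>T x\<close>,
  each of which is killed by a product with one factor fewer.\<close>

lemma kernel_decomposition:
  assumes "(T ^^ a) ((S ^^ b) x) = 0"
  shows "\<exists>u w. x = u + w \<and> (T ^^ a) u = 0 \<and> (S ^^ b) w = 0"
  using assms
proof (induction a arbitrary: b x)
  case 0
  then show ?case by (intro exI[of _ 0] exI[of _ x]) (simp add: linear_0[OF linear_funpow[OF linear_S]])
next
  case (Suc a)
  note IH_a = Suc.IH
  show ?case using Suc.prems
  proof (induction b arbitrary: x)
    case 0
    then show ?case by (intro exI[of _ x] exI[of _ 0]) (simp add: linear_0[OF linear_funpow[OF linear_T]])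
  next
    case (Suc b)
    have lin_Ta: "linear (T ^^ n)" and lin_Sb: "linear (S ^^ n)" for n
      by (simp_all add: linear_funpow linear_T linear_S)
    have "(T ^^ Suc a) ((S ^^ b) (S x)) = 0"
      using Suc.prems by (simp add: funpow_swap1)
    then obtain u1 w1 where uw1: "S x = u1 + w1" "(T ^^ Suc a) u1 = 0" "(S ^^ b) w1 = 0"
      using Suc.IH by blast
    have "(S ^^ Suc b) (T x) = T ((S ^^ Suc b) x)"
      using funpow_commute[of 1 "Suc b" x] by simp
    then have "(T ^^ a) ((S ^^ Suc b) (T x)) = 0"
      using Suc.prems by (simp add: funpow_swap1)
    then obtain u2 w2 where uw2: "T x = u2 + w2" "(T ^^ a) u2 = 0" "(S ^^ Suc b) w2 = 0"
      using IH_a by blast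
    have "x = (1/m) *\<^sub>R (S x - T x)"
      using shift[of x] m_nonzero by simp
    then have "x = (1/m) *\<^sub>R (u1 - u2) + (1/m) *\<^sub>R (w1 - w2)"
      using uw1(1) uw2(1) by (simp add: algebra_simps)
    moreover have "(T ^^ Suc a) ((1/m) *\<^sub>R (u1 - u2)) = 0"
    proof -
      have "(T ^^ Suc a) u2 = 0"
        using uw2(2) linear_0[OF linear_T] by simp
      with uw1(2) show ?thesis
        by (simp add: linear_scale[OF lin_Ta] linear_diff[OF lin_Ta] del: funpow.simps)
    qed
    moreover have "(S ^^ Suc b) ((1/m) *\<^sub>R (w1 - w2)) = 0"
    proof -
      have "(S ^^ Suc b) w1 = 0"
        using uw1(3) linear_0[OF linear_S] by simp
      with uw2(3) show ?thesis
        by (simp add: linear_scale[OF lin_Sb] linear_diff[OF lin_Sb] del: funpow.simps)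
    qed
    ultimately show ?case by blast
  qed
qed

end

lemma scaleR_eq_complex_smult: "r *\<^sub>R (x :: complex^'n) = complex_of_real r *s x"
  by (simp add: vec_eq_iff complex_eq_iff)

lemma complex_combination_split:
  fixes u :: "complex^'n \<Rightarrow> complex"
  shows "(\<Sum>v\<in>t. u v *s v) = (\<Sum>v\<in>t. Re (u v) *\<^sub>R v) + \<i> *s (\<Sum>v\<in>t. Im (u v) *\<^sub>R v)"
proof -
  have "u v *s v = Re (u v) *\<^sub>R v + \<i> *s (Im (u v) *\<^sub>R v)" for v
    by (simp add: vec_eq_iff complex_eq_iff)
  then show ?thesis
    by (simp add: sum.distrib vec.scale_sum_right)
qed

lemma span_subset_vec_span: "span B \<subseteq> vec.span (B :: (complex^'n) set)"
proof (rule span_minimal)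
  show "subspace (vec.span B)"
    unfolding subspace_def
    by (auto simp: scaleR_eq_complex_smult intro: vec.span_add vec.span_scale vec.span_zero)
qed (rule vec.span_superset)

lemma vec_span_eq_span_plus_i_span:
  "vec.span B = {p + \<i> *s q | p q. p \<in> span B \<and> q \<in> span (B :: (complex^'n) set)}"
proof
  show "vec.span B \<subseteq> {p + \<i> *s q | p q. p \<in> span B \<and> q \<in> span B}"
  proof
    fix x assume "x \<in> vec.span B"
    then obtain t u where t: "finite t" "t \<subseteq> B" and x: "x = (\<Sum>v\<in>t. u v *s v)"
      unfolding vec.span_explicit by blast
    have "(\<Sum>v\<in>t. r v *\<^sub>R v) \<in> span B" for r
      using t(2) by (intro span_sum span_scale span_base) auto
    then show "x \<in> {p + \<i> *s q | p q. p \<in> span B \<and> q \<in> span B}"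
      unfolding x complex_combination_split by fast
  qed
next
  show "{p + \<i> *s q | p q. p \<in> span B \<and> q \<in> span B} \<subseteq> vec.span B"
    using span_subset_vec_span by (blast intro: vec.span_add vec.span_scale)
qed

lemma vec_independent_if_totally_real:
  fixes B :: "(complex^'n) set"
  assumes indep: "independent B"
    and totally_real: "\<And>p q. p \<in> span B \<Longrightarrow> q \<in> span B \<Longrightarrow> p + \<i> *s q = 0 \<Longrightarrow> q = 0"
  shows "\<not> vec.dependent B"
proof
  assume "vec.dependent B"
  then obtain t u where t: "finite t" "t \<subseteq> B" and sum0: "(\<Sum>v\<in>t. u v *s v) = 0"
    and nonzero: "\<exists>v\<in>t. u v \<noteq> 0"
    unfolding vec.dependent_explicit by blast
  define p where "p = (\<Sum>v\<in>t. Re (u v) *\<^sub>R v)"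
  define q where "q = (\<Sum>v\<in>t. Im (u v) *\<^sub>R v)"
  have "p \<in> span B" "q \<in> span B"
    unfolding p_def q_def using t(2) by (auto intro: span_sum span_scale span_base)
  moreover have "p + \<i> *s q = 0"
    using sum0 unfolding complex_combination_split p_def q_def .
  ultimately have q0: "q = 0"
    using totally_real by blast
  with \<open>p + \<i> *s q = 0\<close> have p0: "p = 0"
    by simp
  have "Re (u v) = 0" "Im (u v) = 0" if "v \<in> t" for v
    using independentD[OF indep t p0[unfolded p_def] that]
      independentD[OF indep t q0[unfolded q_def] that] by simp_all
  with nonzero show False
    by (auto simp: complex_eq_iff)
qed

lemma complex_basis_of_real_basis:
  assumes "real_basis_of B V"
    and "\<And>p q. p \<in> V \<Longrightarrow> q \<in> V \<Longrightarrow> p + \<i> *s q = 0 \<Longrightarrow> q = 0"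
    and "W = {p + \<i> *s q | p q. p \<in> V \<and> q \<in> V}"
  shows "complex_basis_of B W"
  using assms vec_independent_if_totally_real[of B] vec_span_eq_span_plus_i_span[of B]
  unfolding real_basis_of_def complex_basis_of_def by auto

lemma antilinear_zero:
  assumes "antilinear A"
  shows "A 0 = 0"
proof -
  have "A 0 = A 0 + A 0"
    using assms[unfolded antilinear_def, rule_format, of 1 0 0] by simp
  then show ?thesis by simp
qed

lemma antilinear_add:
  assumes "antilinear A"
  shows "A (x + y) = A x + A y"
  using assms[unfolded antilinear_def, rule_format, of 1 x y] by simp

lemma antilinear_smult:
  assumes "antilinear A"
  shows "A (z *s x) = cnj z *s A x"
  using assms[unfolded antilinear_def, rule_format, of z x 0] antilinear_zero[OF assms] by simp

lemma linear_antilinear: "antilinear A \<Longrightarrow> linear A"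
  by (rule linearI) (simp_all add: antilinear_add antilinear_smult scaleR_eq_complex_smult)

lemma antilinear_shift_i:
  assumes "antilinear A"
  shows "A (\<i> *s y) + c *\<^sub>R (\<i> *s y) = \<i> *s (- (A y - c *\<^sub>R y))"
proof -
  have "c *\<^sub>R (\<i> *s y) = \<i> *s (c *\<^sub>R y)"
    by (simp add: scaleR_eq_complex_smult vector_smult_assoc mult.commute)
  with antilinear_smult[OF assms] show ?thesis
    by (simp add: vec_eq_iff algebra_simps)
qed

lemma antilinear_shift_funpow_i_eq_0:
  assumes "antilinear A"
  shows "((\<lambda>y. A y + c *\<^sub>R y) ^^ n) (\<i> *s y) = 0 \<longleftrightarrow> ((\<lambda>y. A y - c *\<^sub>R y) ^^ n) y = 0"
proof -
  have "linear (\<lambda>y. A y - c *\<^sub>R y)"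
    by (intro linear_compose_sub linear_antilinear[OF assms] linear_scaleR)
  have "((\<lambda>y. A y + c *\<^sub>R y) ^^ n) (\<i> *s y) = \<i> *s (((\<lambda>y. - (A y - c *\<^sub>R y)) ^^ n) y)"
    by (rule funpow_intertwine[symmetric]) (rule antilinear_shift_i[OF assms, symmetric])
  also have "\<dots> = \<i> *s ((-1) ^ n *\<^sub>R ((\<lambda>y. A y - c *\<^sub>R y) ^^ n) y)"
    by (simp only: funpow_uminus[OF \<open>linear (\<lambda>y. A y - c *\<^sub>R y)\<close>])
  finally show ?thesis
    by (simp add: vec_eq_iff)
qed

locale antilinear_shift =
  fixes A :: "complex^'n \<Rightarrow> complex^'n" and l :: real
  assumes antilinear: "antilinear A" and l_nonzero: "l \<noteq> 0"
begin

definition A_minus :: "complex^'n \<Rightarrow> complex^'n" where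
  "A_minus = (\<lambda>y. A y - l *\<^sub>R y)"

definition A_plus :: "complex^'n \<Rightarrow> complex^'n" where
  "A_plus = (\<lambda>y. A y + l *\<^sub>R y)"

sublocale linear_shift_pair A_minus A_plus "2 * l"
proof (rule linear_shift_pair.intro)
  show "linear A_minus"
    unfolding A_minus_def by (intro linear_compose_sub linear_antilinear[OF antilinear] linear_scaleR)
  show "A_plus x - A_minus x = (2 * l) *\<^sub>R x" for x
    by (simp add: A_plus_def A_minus_def scaleR_add_left[symmetric])
qed (use l_nonzero in simp)

lemma gen_eig_R_eq_kernel: "gen_eig_R A l k = {x. (A_minus ^^ k) x = 0}"
  by (simp add: gen_eig_R_def A_minus_def)

lemma gen_eig_C_eq_kernel: "gen_eig_C A l k = {x. (A_minus ^^ k) ((A_plus ^^ k) x) = 0}"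
proof -
  have "A (A y) - complex_of_real (l\<^sup>2) *s y = A (A y) - (l * l) *\<^sub>R y" for y
    by (simp add: scaleR_eq_complex_smult power2_eq_square)
  also have "\<dots> y = A_minus (A_plus y)" for y
    using linear_add[OF linear_antilinear[OF antilinear]] linear_scale[OF linear_antilinear[OF antilinear]]
    by (simp add: A_minus_def A_plus_def algebra_simps)
  finally have "(\<lambda>y. A (A y) - complex_of_real (l\<^sup>2) *s y) = (\<lambda>y. A_minus (A_plus y))"
    by (rule ext)
  then show ?thesis
    unfolding gen_eig_C_def by (simp only: funpow_comp_commute[of A_minus A_plus, OF commute])
qed

lemma A_minus_funpow_i_eq_0: "(A_minus ^^ n) (\<i> *s y) = 0 \<longleftrightarrow> (A_plus ^^ n) y = 0"
  using antilinear_shift_funpow_i_eq_0[OF antilinear, where c = "- l"] by (simp add: A_minus_def A_plus_def)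

lemma A_plus_funpow_i_eq_0: "(A_plus ^^ n) (\<i> *s y) = 0 \<longleftrightarrow> (A_minus ^^ n) y = 0"
  using antilinear_shift_funpow_i_eq_0[OF antilinear, where c = l] by (simp add: A_minus_def A_plus_def)

lemma gen_eig_R_totally_real:
  assumes "p \<in> gen_eig_R A l k" "q \<in> gen_eig_R A l k" "p + \<i> *s q = 0"
  shows "q = 0"
proof -
  have "p = \<i> *s (- q)"
    using assms(3) by (simp add: eq_neg_iff_add_eq_0 vec.scale_minus_right)
  with assms(1) have "(A_minus ^^ k) (\<i> *s (- q)) = 0"
    by (simp only: gen_eig_R_eq_kernel mem_Collect_eq)
  then have "(A_plus ^^ k) (- q) = 0"
    by (simp only: A_minus_funpow_i_eq_0)
  then have "(A_plus ^^ k) q = 0"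
    by (simp add: linear_neg[OF linear_funpow[OF linear_S]])
  with assms(2) show ?thesis
    by (simp add: gen_eig_R_eq_kernel kernels_disjoint)
qed

lemma gen_eig_C_eq_real_form:
  "gen_eig_C A l k = {p + \<i> *s q | p q. p \<in> gen_eig_R A l k \<and> q \<in> gen_eig_R A l k}"
proof -
  have lin_minus: "linear (A_minus ^^ n)" and lin_plus: "linear (A_plus ^^ n)" for n
    by (simp_all add: linear_funpow linear_T linear_S)
  have "p + \<i> *s q \<in> gen_eig_C A l k" if "p \<in> gen_eig_R A l k" "q \<in> gen_eig_R A l k" for p q
  proof -
    have "(A_minus ^^ k) ((A_plus ^^ k) p) = 0"
      using that(1) linear_0[OF lin_plus] by (simp add: gen_eig_R_eq_kernel funpow_commute)
    moreover have "(A_plus ^^ k) (\<i> *s q) = 0"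
      using that(2) by (simp add: gen_eig_R_eq_kernel A_plus_funpow_i_eq_0)
    ultimately show ?thesis
      using linear_0[OF lin_minus] by (simp add: gen_eig_C_eq_kernel linear_add[OF lin_plus])
  qed
  moreover have "\<exists>p q. x = p + \<i> *s q \<and> p \<in> gen_eig_R A l k \<and> q \<in> gen_eig_R A l k"
    if x: "x \<in> gen_eig_C A l k" for x
  proof -
    obtain u w where uw: "x = u + w" "(A_minus ^^ k) u = 0" "(A_plus ^^ k) w = 0"
      using x kernel_decomposition[of k k x] by (auto simp: gen_eig_C_eq_kernel)
    define q where "q = - \<i> *s w"
    have w: "w = \<i> *s q"
      by (simp add: q_def vector_smult_assoc)
    have "(A_minus ^^ k) q = 0"
      using uw(3) unfolding w A_plus_funpow_i_eq_0 .
    with uw(1,2) w show ?thesis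
      by (auto simp: gen_eig_R_eq_kernel)
  qed
  ultimately show ?thesis
    by blast
qed

end

theorem mainTheorem5:
  fixes A :: "complex^'n \<Rightarrow> complex^'n" and l :: real and k :: nat
    and B :: "(complex^'n) set"
  assumes "antilinear A" and "l > 0"
    and "real_basis_of B (gen_eig_R A l k)"
  shows "complex_basis_of B (gen_eig_C A l k)"
proof -
  interpret antilinear_shift A l
    using assms(1,2) by unfold_locales simp_all
  show ?thesis
    using assms(3) gen_eig_R_totally_real gen_eig_C_eq_real_form by (rule complex_basis_of_real_basis)
qed

end
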